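(* Let $q$ be a prime power and $m>1$ an integer. Let $L_1(x)\in\mathbf{F}_{q^m}[x]$ be a linearized polynomial that is a permutation polynomial of $\mathbf{F}_{q^m}$, and let $L_2(x)\in\mathbf{F}_{q^m}[x]$ be a linearized polynomial. Let $b\in\mathbf{F}_q$, $\gamma\in\mathbf{F}_{q^m}$, let $h:\mathbf{F}_q\to\mathbf{F}_q$ be a map, and let $f:\mathbf{F}_{q^m}\to\mathbf{F}_q$ be a surjective map. Suppose $L_1^{-1}(L_2(\gamma))$ is a $b$-linear translator of $f$, where $L_1^{-1}$ denotes the inverse of the bijection $x\mapsto L_1(x)$ of $\mathbf{F}_{q^m}$. Then $L_1(x)+L_2(\gamma)h(f(x))$ is a permutation polynomial of $\mathbf{F}_{q^m}$ if and only if either $L_2(\gamma)=0$ or $x+b\,h(x)$ is a permutation polynomial of $\mathbf{F}_q$.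
   Context: A linearized polynomial over $\mathbf{F}_{q^m}$ is a polynomial of the form $\sum_{i=0}^{m-1}a_i x^{q^i}$ with $a_i\in\mathbf{F}_{q^m}$. Linear translator: let $f:\mathbf{F}_{q^m}\to\mathbf{F}_q$, $a\in\mathbf{F}_q$ and $\alpha$ a nonzero element of $\mathbf{F}_{q^m}$; $\alpha$ is an $a$-linear translator of $f$ if $f(x+u\alpha)-f(x)=ua$ for all $x\in\mathbf{F}_{q^m}$ and all $u\in\mathbf{F}_q$. A permutation polynomial (or map) of a finite field $K$ is one inducing a bijection $K\to K$. *)

theory Defs
  imports "HOL-Computational_Algebra.Primes"
begin

text \<open>The ambient field of type 'a plays the role of F_{q^m} (CARD('a) = q^m);
  its subfield F_q is the set of fixed points of the q-Frobenius.\<close>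

definition Fq :: "nat \<Rightarrow> 'a::field set" where
  "Fq q = {x. x ^ q = x}"

definition prime_power :: "nat \<Rightarrow> bool" where
  "prime_power q \<longleftrightarrow> (\<exists>p k. prime p \<and> k > 0 \<and> q = p ^ k)"

definition linearized :: "nat \<Rightarrow> nat \<Rightarrow> ('a::field \<Rightarrow> 'a) \<Rightarrow> bool" where
  "linearized q m L \<longleftrightarrow> (\<exists>a::nat \<Rightarrow> 'a. \<forall>x. L x = (\<Sum>i<m. a i * x ^ (q ^ i)))"

definition linear_translator :: "nat \<Rightarrow> ('a::field \<Rightarrow> 'a) \<Rightarrow> 'a \<Rightarrow> 'a \<Rightarrow> bool" where
  "linear_translator q f a \<alpha> \<longleftrightarrow>
     \<alpha> \<noteq> 0 \<and> (\<forall>x. \<forall>u \<in> Fq q. f (x + u * \<alpha>) - f x = u * a)"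

end

theory Submission
  imports Defs "HOL-Number_Theory.Residues"
begin

text \<open>Put \<open>\<alpha> = L\<^sub>1\<^sup>-\<^sup>1(L\<^sub>2(\<gamma>))\<close>. Since \<open>L\<^sub>1\<close> is \<open>F\<^sub>q\<close>-linear and \<open>h(f(x)) \<in> F\<^sub>q\<close>,
  the map is \<open>L\<^sub>1 \<circ> G\<close> with \<open>G(x) = x + h(f(x)) \<alpha>\<close>, so it permutes iff \<open>G\<close> does.
  Because \<open>\<alpha>\<close> is a \<open>b\<close>-linear translator of \<open>f\<close>, \<open>G\<close> moves \<open>x\<close> along the line
  \<open>x + F\<^sub>q \<alpha>\<close> and \<open>f(G(x)) = \<phi>(f(x))\<close> for \<open>\<phi>(u) = u + b h(u)\<close>; from this, a collision
  of \<open>G\<close> gives a collision of \<open>\<phi>\<close> and conversely. Finally \<open>L\<^sub>2(\<gamma>) \<noteq> 0\<close> always,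
  as \<open>\<alpha> \<noteq> 0\<close>, so the first disjunct never applies.\<close>

unbundle no m_inv_syntax

lemma prime_CHAR_finite_field: "prime CHAR('a::{finite,field})"
  by (rule prime_CHAR_semidom) (simp add: finite_imp_CHAR_pos)

lemma prime_power_eq_CHAR_power:
  assumes "prime_power q" "m > 0" "card (UNIV :: 'a::{finite,field} set) = q ^ m"
  shows "\<exists>k. q = CHAR('a) ^ k"
proof -
  obtain p k where p: "prime p" and q: "q = p ^ k" and "k > 0"
    using assms(1) unfolding prime_power_def by blast
  have "CHAR('a) dvd p ^ (k * m)"
    using CHAR_dvd_CARD[where 'a='a] assms(3) q by (simp add: power_mult)
  then have "CHAR('a) dvd p"
    using prime_CHAR_finite_field prime_dvd_power by blast
  then have "CHAR('a) = p"
    using prime_CHAR_finite_field p primes_dvd_imp_eq by blast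
  with q show ?thesis by blast
qed

lemma Fq_mult: "u \<in> Fq q \<Longrightarrow> v \<in> Fq q \<Longrightarrow> (u::'a::field) * v \<in> Fq q"
  by (simp add: Fq_def power_mult_distrib)

lemma Fq_power_q_power:
  assumes "c \<in> Fq q"
  shows "(c::'a::field) ^ (q ^ i) = c"
proof (induction i)
  case (Suc i)
  have "c ^ (q ^ Suc i) = (c ^ (q ^ i)) ^ q"
    by (simp add: power_mult[symmetric] mult.commute)
  with Suc assms show ?case by (simp add: Fq_def)
qed simp

context
  fixes q k :: nat
  assumes q_CHAR_power: "q = CHAR('a::{finite,field}) ^ k"
begin

lemma Frobenius_power_add: "((x::'a) + y) ^ (q ^ i) = x ^ (q ^ i) + y ^ (q ^ i)"
  using q_CHAR_power prime_CHAR_finite_field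
  by (intro freshmans_dream') (auto simp: power_mult[symmetric])

lemma Fq_add: "u \<in> Fq q \<Longrightarrow> v \<in> Fq q \<Longrightarrow> (u::'a) + v \<in> Fq q"
  using Frobenius_power_add[of u v 1] by (simp add: Fq_def)

lemma Fq_diff:
  assumes "u \<in> Fq q" "v \<in> Fq q"
  shows "(u::'a) - v \<in> Fq q"
proof -
  have "(u - v) ^ q + v ^ q = u ^ q"
    using Frobenius_power_add[of "u - v" v 1] by simp
  with assms show ?thesis by (simp add: Fq_def algebra_simps)
qed

lemma linearized_Fq_linear:
  assumes "linearized q m L" "c \<in> Fq q"
  shows "L (x + c * y) = L x + c * L (y::'a)"
proof -
  obtain a where L: "\<And>x. L x = (\<Sum>i<m. a i * x ^ (q ^ i))"
    using assms(1) unfolding linearized_def by blast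
  have "L (x + c * y) = (\<Sum>i<m. a i * x ^ (q ^ i) + c * (a i * y ^ (q ^ i)))"
    unfolding L using Fq_power_q_power[OF assms(2)]
    by (intro sum.cong refl) (simp add: Frobenius_power_add power_mult_distrib algebra_simps)
  then show ?thesis
    unfolding L by (simp add: sum.distrib sum_distrib_left)
qed

lemma linearized_zero:
  assumes "linearized q m L"
  shows "L (0::'a) = 0"
proof -
  have "L 0 + L 0 = L 0"
    using linearized_Fq_linear[OF assms, of 1 0 0] by (simp add: Fq_def)
  then show ?thesis by (metis add.right_neutral add_left_cancel)
qed

lemma linearized_inj_nonzero:
  assumes "linearized q m L" "inj L" "(x::'a) \<noteq> 0"
  shows "L x \<noteq> 0"
  using linearized_zero[OF assms(1)] assms(2,3) by (metis injD)

end

context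
  fixes f h :: "'a::idom \<Rightarrow> 'a" and K :: "'a set" and \<alpha> b :: 'a
  assumes translator: "\<And>x u. u \<in> K \<Longrightarrow> f (x + u * \<alpha>) - f x = u * b"
    and range_f: "range f = K"
    and h_K: "h ` K \<subseteq> K"
    and K_diff: "\<And>u v. u \<in> K \<Longrightarrow> v \<in> K \<Longrightarrow> u - v \<in> K"
    and \<alpha>_nonzero: "\<alpha> \<noteq> 0"
begin

lemma inj_on_translator_shift_if_inj:
  assumes inj: "inj (\<lambda>x. x + h (f x) * \<alpha>)"
  shows "inj_on (\<lambda>u. u + b * h u) K"
proof (rule inj_onI)
  fix u v assume u: "u \<in> K" and v: "v \<in> K" and eq: "u + b * h u = v + b * h v"
  obtain x where x: "f x = u" using range_f u by blast
  define w where "w = h u - h v"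
  have w_K: "w \<in> K" unfolding w_def using K_diff h_K u v by blast
  have wb: "w * b = v - u" using eq by (simp add: w_def algebra_simps)
  define y where "y = x + w * \<alpha>"
  have "f y = v" using translator[OF w_K, of x] wb x by (simp add: y_def)
  then have "y + h (f y) * \<alpha> = x + h (f x) * \<alpha>"
    using x by (simp add: y_def w_def algebra_simps)
  then have "y = x" using inj by (auto dest: injD)
  then have "w = 0" using \<alpha>_nonzero by (simp add: y_def)
  with wb show "u = v" by simp
qed

lemma inj_translator_shift_if_inj_on:
  assumes inj: "inj_on (\<lambda>u. u + b * h u) K"
  shows "inj (\<lambda>x. x + h (f x) * \<alpha>)"
proof (rule injI)
  fix x y assume eq: "x + h (f x) * \<alpha> = y + h (f y) * \<alpha>"
  have f_K: "f z \<in> K" for z using range_f by blast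
  define u where "u = h (f y) - h (f x)"
  have u_K: "u \<in> K" unfolding u_def using K_diff h_K f_K by blast
  have x_eq: "x = y + u * \<alpha>" using eq by (simp add: u_def algebra_simps)
  then have "f x = f y + u * b" using translator[OF u_K, of y] by (simp add: algebra_simps)
  then have "f x + b * h (f x) = f y + b * h (f y)" by (simp add: u_def algebra_simps)
  then have "f x = f y" using inj f_K by (auto dest: inj_onD)
  then have "u = 0" by (simp add: u_def)
  with x_eq show "x = y" by simp
qed

lemma inj_translator_shift_iff:
  "inj (\<lambda>x. x + h (f x) * \<alpha>) \<longleftrightarrow> inj_on (\<lambda>u. u + b * h u) K"
  using inj_on_translator_shift_if_inj inj_translator_shift_if_inj_on by blast

end

lemma finite_UNIV_bij_iff_inj: "bij (g :: 'a::finite \<Rightarrow> 'a) \<longleftrightarrow> inj g"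
  using finite_UNIV_inj_surj[OF finite_UNIV] by (auto simp: bij_def)

lemma finite_endo_inj_on_iff_bij_betw:
  assumes "finite A" "g ` A \<subseteq> A"
  shows "inj_on g A \<longleftrightarrow> bij_betw g A A"
  using endo_inj_surj[OF assms] by (auto simp: bij_betw_def)

theorem theorem4p1:
  fixes q m :: nat
    and L1 L2 f h :: "'a::{finite,field} \<Rightarrow> 'a"
    and b \<gamma> :: 'a
  assumes "prime_power q" and "m > 1" and "card (UNIV :: 'a set) = q ^ m"
    and "linearized q m L1" and "bij L1"
    and "linearized q m L2"
    and "b \<in> Fq q"
    and "h ` Fq q \<subseteq> Fq q"
    and "f ` UNIV = Fq q"
    and "linear_translator q f b (inv L1 (L2 \<gamma>))"
  shows "bij (\<lambda>x. L1 x + L2 \<gamma> * h (f x)) \<longleftrightarrow>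
           (L2 \<gamma> = 0 \<or> bij_betw (\<lambda>x. x + b * h x) (Fq q) (Fq q))"
proof -
  obtain k where k: "q = CHAR('a) ^ k"
    using prime_power_eq_CHAR_power[OF assms(1) _ assms(3)] assms(2) by auto
  define \<alpha> where "\<alpha> = inv L1 (L2 \<gamma>)"
  have L1_\<alpha>: "L1 \<alpha> = L2 \<gamma>"
    unfolding \<alpha>_def using assms(5) by (meson bij_inv_eq_iff)
  have \<alpha>: "\<alpha> \<noteq> 0" "\<And>x u. u \<in> Fq q \<Longrightarrow> f (x + u * \<alpha>) - f x = u * b"
    using assms(10) unfolding linear_translator_def \<alpha>_def by auto
  have "L2 \<gamma> \<noteq> 0"
    using linearized_inj_nonzero[OF k assms(4) bij_is_inj[OF assms(5)] \<alpha>(1)] L1_\<alpha> by simp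
  define G where "G x = x + h (f x) * \<alpha>" for x
  have "L1 x + L2 \<gamma> * h (f x) = L1 (G x)" for x
  proof -
    have "h (f x) \<in> Fq q" using assms(8,9) by blast
    from linearized_Fq_linear[OF k assms(4) this, of x \<alpha>] show ?thesis
      by (simp add: G_def L1_\<alpha> mult.commute)
  qed
  then have "bij (\<lambda>x. L1 x + L2 \<gamma> * h (f x)) \<longleftrightarrow> bij (L1 \<circ> G)"
    by (simp add: comp_def)
  also have "\<dots> \<longleftrightarrow> inj G"
    using bij_betw_comp_iff2[OF assms(5), of G UNIV] finite_UNIV_bij_iff_inj[of G] by simp
  also have "\<dots> \<longleftrightarrow> inj_on (\<lambda>u. u + b * h u) (Fq q)"
    unfolding G_def by (rule inj_translator_shift_iff[OF \<alpha>(2) assms(9,8) Fq_diff[OF k] \<alpha>(1)])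
  also have "\<dots> \<longleftrightarrow> bij_betw (\<lambda>u. u + b * h u) (Fq q) (Fq q)"
    using assms(7,8)
    by (intro finite_endo_inj_on_iff_bij_betw) (auto intro!: Fq_add[OF k] Fq_mult)
  finally show ?thesis using \<open>L2 \<gamma> \<noteq> 0\<close> by simp
qed

end
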